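(* Let $p>1$, let $n>p$ be an integer, let $M$ be a constant with $M>p-1$ and $M>\frac{n(p-1)}{n-p}$, and set $Q=\frac{Mp-p+1}{p-1}$. Put \[ a=\frac{M-p+1}{Mn-pn+n-Mp},\qquad u(r)=\left(\frac{a n-1}{1+a^{\frac{p}{p-1}} M\, r^{\frac{p}{p-1}}}\right)^{\frac{p-1}{M-p+1}} \quad (r\ge 0). \] Then $a>0$, $an>1$, and $u$ is a positive ground state solution of \[ \left(\varphi(u'(r))\right)'+\frac{n-1}{r}\varphi(u'(r))+u^M+u^Q=0 \quad (r>0),\qquad u'(0)=0, \] i.e. $u>0$ on $[0,\infty)$, $u$ satisfies the equation for all $r>0$, $u'(0)=0$, and $u(r)\to 0$ as $r\to\infty$. Moreover $u$ satisfies $\varphi(u'(r))=-a r u^M(r)$ for all $r\ge 0$.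
   Context: Here $\varphi(z)=z|z|^{p-2}$, so that $\left(\varphi(u')\right)'+\frac{n-1}{r}\varphi(u')$ is the radial $p$-Laplacian in $\mathbb{R}^n$. *)

theory Defs
  imports "HOL-Analysis.Analysis"
begin

text \<open>phi(z) = z |z|^(p-2), so that (phi(u'))' + (n-1)/r phi(u') is the radial p-Laplacian.\<close>
definition phi :: "real \<Rightarrow> real \<Rightarrow> real" where
  "phi p z = z * \<bar>z\<bar> powr (p - 2)"

end

theory Submission
  imports Defs
begin

text \<open>
  With q = p/(p-1) and \<beta> = (p-1)/(M-p+1), the profile u = (c/w)^\<beta>, w = 1 + b r^q,
  satisfies -u' = (\<beta> q b/c) r^(q-1) u^(1+1/\<beta>); for b = a^q M and c = a n - 1 = \<beta> q M a
  this is the first integral \<phi>(u') = -a r u^M. Differentiating it turns the radial equation,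
  divided by u^M, into a M r (-u')/u + u^(Q-M) = a n - 1, which holds because
  a M r (-u')/u = c (1 - 1/w) and u^(Q-M) = u^(1/\<beta>) = c/w.
\<close>

lemma phi_minus:
  assumes "x \<ge> 0"
  shows "phi p (- x) = - (x powr (p - 1))"
proof (cases "x = 0")
  case False
  then show ?thesis
    using powr_mult_base[OF assms, of "p - 2"] by (simp add: phi_def assms)
qed (simp add: phi_def)

lemma has_real_derivative_powr_at_0:
  assumes "q > 1"
  shows "((\<lambda>r::real. r powr q) has_real_derivative 0) (at 0 within {0..})"
proof -
  have "((\<lambda>y::real. y powr (q - 1)) \<longlongrightarrow> 0) (at 0 within {0..})"
    by (rule tendsto_zero_powrI[of _ _ _ "q - 1"])
       (use assms in \<open>auto intro!: tendsto_eq_intros simp: eventually_at_filter\<close>)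
  moreover have "\<forall>\<^sub>F y in at 0 within {0..}. y powr (q - 1) = (y powr q - 0 powr q) / (y - 0)"
    unfolding eventually_at_filter by (auto simp: powr_diff)
  ultimately show ?thesis
    unfolding has_field_derivative_iff using tendsto_cong by fastforce
qed

lemma has_real_derivative_const_div_powr:
  assumes "t > 0" "c > 0"
  shows "((\<lambda>t::real. (c / t) powr \<beta>) has_real_derivative - \<beta> * (c / t) powr \<beta> / t) (at t)"
proof (subst DERIV_cong_ev[OF refl _ refl])
  have "\<forall>\<^sub>F z in nhds t. z > 0"
    using assms eventually_nhds_in_open[of "{0<..}" t] by simp
  then show "\<forall>\<^sub>F z in nhds t. (c / z) powr \<beta> = exp (\<beta> * (ln c - ln z))"
    by eventually_elim (use assms in \<open>simp add: powr_def ln_div\<close>)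
  show "((\<lambda>z. exp (\<beta> * (ln c - ln z))) has_real_derivative - \<beta> * (c / t) powr \<beta> / t) (at t)"
    using assms by (auto intro!: derivative_eq_intros simp: powr_def ln_div)
qed

lemma radial_p_laplacian_first_integral:
  fixes u u' :: "real \<Rightarrow> real" and a M n r :: real
  assumes "r > 0"
    and deriv: "\<And>s. s > 0 \<Longrightarrow> (u has_real_derivative u' s) (at s)"
    and pos: "\<And>s. s > 0 \<Longrightarrow> u s > 0"
    and first_integral: "\<And>s. s > 0 \<Longrightarrow> phi p (u' s) = - a * s * u s powr M"
  shows "(\<lambda>s. phi p (deriv u s)) differentiable (at r)"
    and "deriv (\<lambda>s. phi p (deriv u s)) r + (n - 1) / r * phi p (deriv u r)
           = - n * a * u r powr M - a * M * u r powr (M - 1) * (r * u' r)"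
proof -
  have "((\<lambda>s. - a * s * u s powr M) has_real_derivative
          - a * u r powr M - a * r * (M * u r powr (M - 1) * u' r)) (at r)"
    using deriv[OF \<open>r > 0\<close>] pos[OF \<open>r > 0\<close>]
    by (auto intro!: derivative_eq_intros simp: algebra_simps)
  then have D: "((\<lambda>s. phi p (deriv u s)) has_real_derivative
          - a * u r powr M - a * r * (M * u r powr (M - 1) * u' r)) (at r)"
    by (rule has_field_derivative_transform_within_open[where S = "{0<..}"])
       (use \<open>r > 0\<close> first_integral deriv DERIV_imp_deriv in fastforce)+
  then show "(\<lambda>s. phi p (deriv u s)) differentiable (at r)"
    by (rule has_field_derivative_imp_has_derivative[THEN differentiableI])
  show "deriv (\<lambda>s. phi p (deriv u s)) r + (n - 1) / r * phi p (deriv u r)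
           = - n * a * u r powr M - a * M * u r powr (M - 1) * (r * u' r)"
    using \<open>r > 0\<close> by (simp add: DERIV_imp_deriv[OF D] DERIV_imp_deriv[OF deriv] first_integral
        field_simps)
qed

locale bliss_profile =
  fixes c b q \<beta> :: real
  assumes c_pos: "c > 0" and b_pos: "b > 0" and q_gt_1: "q > 1" and \<beta>_pos: "\<beta> > 0"
begin

definition weight :: "real \<Rightarrow> real" where
  "weight r = 1 + b * r powr q"

definition profile :: "real \<Rightarrow> real" where
  "profile r = (c / weight r) powr \<beta>"

definition profile_deriv :: "real \<Rightarrow> real" where
  "profile_deriv r = - \<beta> * q * b * r powr (q - 1) * profile r / weight r"

lemma weight_ge_1: "weight r \<ge> 1"
  using b_pos by (simp add: weight_def)

lemma weight_pos: "weight r > 0"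
  using weight_ge_1[of r] by linarith

lemma profile_pos: "profile r > 0"
  using c_pos weight_pos[of r] by (simp add: profile_def)

lemma profile_powr_inverse: "profile r powr (1 / \<beta>) = c / weight r"
  using c_pos weight_pos[of r] \<beta>_pos by (simp add: profile_def powr_powr)

lemma has_real_derivative_profile:
  assumes "r > 0"
  shows "(profile has_real_derivative profile_deriv r) (at r)"
proof -
  have "(weight has_real_derivative b * (q * r powr (q - 1))) (at r)"
    unfolding weight_def using assms by (auto intro!: derivative_eq_intros)
  from DERIV_chain2[OF has_real_derivative_const_div_powr[OF weight_pos c_pos, where \<beta> = \<beta>] this]
  show ?thesis
    unfolding profile_deriv_def profile_def [abs_def]
    by (rule DERIV_cong) (simp add: profile_def)
qed

lemma has_real_derivative_profile_at_0:
  "(profile has_real_derivative profile_deriv 0) (at 0 within {0..})"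
proof -
  have "(weight has_real_derivative 0) (at 0 within {0..})"
    unfolding weight_def
    using DERIV_add[OF DERIV_const DERIV_cmult[OF has_real_derivative_powr_at_0[OF q_gt_1]], of 1 b]
    by simp
  from DERIV_chain2[OF has_real_derivative_const_div_powr[OF weight_pos c_pos, where \<beta> = \<beta>] this]
  show ?thesis
    by (simp add: profile_def [abs_def] profile_deriv_def)
qed

lemma has_real_derivative_profile_within:
  assumes "r \<ge> 0"
  shows "(profile has_real_derivative profile_deriv r) (at r within {0..})"
  using assms has_real_derivative_profile_at_0 has_real_derivative_profile
  by (cases "r = 0") (auto intro: has_field_derivative_at_within)

lemma profile_tendsto_0: "(profile \<longlongrightarrow> 0) at_top"
proof -
  have "filterlim weight at_top at_top"
    unfolding weight_def
    by (rule filterlim_tendsto_add_at_top[OF tendsto_const]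
        filterlim_tendsto_pos_mult_at_top[OF tendsto_const b_pos real_powr_at_top])+
       (use q_gt_1 in simp)
  then have "((\<lambda>r. c / weight r) \<longlongrightarrow> 0) at_top"
    by (intro tendsto_divide_0[OF tendsto_const] filterlim_at_top_imp_at_infinity)
  then show ?thesis
    unfolding profile_def [abs_def]
    by (rule tendsto_zero_powrI[OF _ tendsto_const])
       (use c_pos weight_pos \<beta>_pos in \<open>auto intro!: always_eventually less_imp_le\<close>)
qed

lemma mult_profile_deriv:
  assumes "r > 0"
  shows "r * profile_deriv r = - \<beta> * q * (1 - 1 / weight r) * profile r"
proof -
  have "r * r powr (q - 1) = r powr q"
    using powr_mult_base[of r "q - 1"] assms by simp
  then have "r * profile_deriv r = - \<beta> * q * (weight r - 1) * profile r / weight r"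
    by (simp add: profile_deriv_def weight_def)
  then show ?thesis
    using weight_pos[of r] by (simp add: field_simps)
qed

lemma phi_profile_deriv:
  assumes "p > 1" "q = p / (p - 1)" "r \<ge> 0"
  shows "phi p (profile_deriv r)
    = - ((\<beta> * q * b / c) powr (p - 1) * r * profile r powr ((p - 1) * (1 + 1 / \<beta>)))"
proof -
  define k where "k = \<beta> * q * b / c"
  define X where "X = k * r powr (q - 1) * profile r powr (1 + 1 / \<beta>)"
  have "profile r powr (1 + 1 / \<beta>) = profile r * (c / weight r)"
    using profile_pos[of r] by (simp add: powr_add profile_powr_inverse)
  then have "profile_deriv r = - X"
    using c_pos by (simp add: X_def k_def profile_deriv_def)
  moreover have "X \<ge> 0"
    using \<beta>_pos q_gt_1 b_pos c_pos by (simp add: X_def k_def)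
  moreover have "(q - 1) * (p - 1) = 1"
    using assms(1,2) by (simp add: field_simps)
  then have "X powr (p - 1) = k powr (p - 1) * r * profile r powr ((p - 1) * (1 + 1 / \<beta>))"
    unfolding X_def powr_mult powr_powr using assms(3) by (simp add: mult.commute)
  ultimately show ?thesis
    by (simp add: phi_minus k_def)
qed

end

locale ground_state = bliss_profile c b q \<beta> for c b q \<beta> +
  fixes p M a n :: real
  assumes p_gt_1: "p > 1" and a_pos: "a > 0"
    and q_eq: "q = p / (p - 1)" and \<beta>_eq: "\<beta> = (p - 1) / (M - p + 1)"
    and b_eq: "b = a powr q * M" and c_eq: "c = \<beta> * q * M * a" and n_eq: "a * n = c + 1"
begin

lemma M_pos: "M > 0"
  using \<beta>_pos p_gt_1 by (simp add: \<beta>_eq zero_less_divide_iff)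

lemma profile_first_integral:
  assumes "r \<ge> 0"
  shows "phi p (profile_deriv r) = - a * r * profile r powr M"
proof -
  have "\<beta> * q * b / c = a powr (q - 1)"
    using \<beta>_pos q_gt_1 M_pos a_pos by (simp add: b_eq c_eq powr_diff)
  moreover have "(q - 1) * (p - 1) = 1" and "(p - 1) * (1 + 1 / \<beta>) = M"
    using p_gt_1 \<beta>_pos by (simp_all add: q_eq \<beta>_eq field_simps)
  ultimately show ?thesis
    using phi_profile_deriv[OF p_gt_1 q_eq assms] a_pos by (simp add: powr_powr)
qed

lemma profile_solves_radial_equation:
  assumes "r > 0"
  shows "(\<lambda>s. phi p (deriv profile s)) differentiable (at r)"
    and "deriv (\<lambda>s. phi p (deriv profile s)) r + (n - 1) / r * phi p (deriv profile r)
           + profile r powr M + profile r powr (M + 1 / \<beta>) = 0"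
proof -
  have profile_hyps:
      "\<And>s. s > 0 \<Longrightarrow> (profile has_real_derivative profile_deriv s) (at s)"
      "\<And>s. s > 0 \<Longrightarrow> profile s > 0"
      "\<And>s. s > 0 \<Longrightarrow> phi p (profile_deriv s) = - a * s * profile s powr M"
    by (simp_all add: has_real_derivative_profile profile_pos profile_first_integral)
  from assms profile_hyps show "(\<lambda>s. phi p (deriv profile s)) differentiable (at r)"
    by (rule radial_p_laplacian_first_integral(1))
  from assms profile_hyps have first_integral:
      "deriv (\<lambda>s. phi p (deriv profile s)) r + (n - 1) / r * phi p (deriv profile r)
       = - n * a * profile r powr M - a * M * profile r powr (M - 1) * (r * profile_deriv r)"
    by (rule radial_p_laplacian_first_integral(2))
  have "a * M * profile r powr (M - 1) * (r * profile_deriv r)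
      = - (\<beta> * q * M * a) * (1 - 1 / weight r) * (profile r * profile r powr (M - 1))"
    by (simp add: mult_profile_deriv[OF assms])
  also have "\<dots> = - c * (1 - 1 / weight r) * profile r powr M"
    using powr_mult_base[of "profile r" "M - 1"] profile_pos[of r] by (simp add: c_eq)
  finally have deriv_term: "a * M * profile r powr (M - 1) * (r * profile_deriv r)
      = - c * (1 - 1 / weight r) * profile r powr M" .
  have "deriv (\<lambda>s. phi p (deriv profile s)) r + (n - 1) / r * phi p (deriv profile r)
           + profile r powr M + profile r powr (M + 1 / \<beta>)
      = - n * a * profile r powr M + c * (1 - 1 / weight r) * profile r powr M
           + profile r powr M + profile r powr M * c / weight r"
    unfolding first_integral deriv_term
    by (simp add: powr_add profile_powr_inverse)
  also have "\<dots> = (1 + c - a * n) * profile r powr M"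
    using weight_pos[of r] by (simp add: field_simps)
  finally show "deriv (\<lambda>s. phi p (deriv profile s)) r + (n - 1) / r * phi p (deriv profile r)
           + profile r powr M + profile r powr (M + 1 / \<beta>) = 0"
    by (simp add: n_eq)
qed

end

lemma ground_state_coefficients:
  fixes p M a n :: real
  assumes "p > 1" "n > p" "M > p - 1" "M > n * (p - 1) / (n - p)"
    and "a = (M - p + 1) / (M * n - p * n + n - M * p)"
  shows "a > 0" and "a * n - 1 = p / (M - p + 1) * M * a"
proof -
  have "M * (n - p) > n * (p - 1)"
    using assms(2,4) by (simp add: pos_divide_less_eq)
  then have D_pos: "M * n - p * n + n - M * p > 0"
    by (simp add: algebra_simps)
  then show "a > 0"
    using assms(3,5) by simp
  have "a * n - 1 = M * p / (M * n - p * n + n - M * p)"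
    using D_pos by (simp add: assms(5) field_simps)
  also have "\<dots> = p / (M - p + 1) * M * a"
    using assms(3) by (simp add: assms(5))
  finally show "a * n - 1 = p / (M - p + 1) * M * a" .
qed

theorem mainTheorem2:
  fixes p M Q a :: real and n :: nat and u :: "real \<Rightarrow> real"
  assumes hp: "p > 1"
    and hn: "real n > p"
    and hM1: "M > p - 1"
    and hM2: "M > real n * (p - 1) / (real n - p)"
    and hQ: "Q = (M * p - p + 1) / (p - 1)"
    and ha: "a = (M - p + 1) / (M * real n - p * real n + real n - M * p)"
    and hu: "u = (\<lambda>r. ((a * real n - 1) /
                 (1 + a powr (p / (p - 1)) * M * r powr (p / (p - 1))))
                 powr ((p - 1) / (M - p + 1)))"
  shows "a > 0 \<and> a * real n > 1
    \<and> (\<forall>r\<ge>0. u r > 0)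
    \<and> (\<forall>r>0. u differentiable (at r)
         \<and> (\<lambda>s. phi p (deriv u s)) differentiable (at r)
         \<and> deriv (\<lambda>s. phi p (deriv u s)) r + (real n - 1) / r * phi p (deriv u r)
             + (u r) powr M + (u r) powr Q = 0)
    \<and> (u has_real_derivative 0) (at 0 within {0..})
    \<and> (u \<longlongrightarrow> 0) at_top
    \<and> (\<forall>r\<ge>0. \<exists>d. (u has_real_derivative d) (at r within {0..})
         \<and> phi p d = - a * r * (u r) powr M)"
proof -
  define q \<beta> where "q = p / (p - 1)" and "\<beta> = (p - 1) / (M - p + 1)"
  note coefficients = ground_state_coefficients[OF hp hn hM1 hM2 ha]
  have "a * real n - 1 = \<beta> * q * M * a"
    using coefficients(2) hp hM1 by (simp add: q_def \<beta>_def)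
  moreover have "a * real n - 1 > 0"
    using coefficients hp hM1 by simp
  ultimately interpret ground_state "a * real n - 1" "a powr q * M" q \<beta> p M a "real n"
    using coefficients(1) hp hM1 by unfold_locales (auto simp: q_def \<beta>_def)
  have "u = profile"
    unfolding hu profile_def [abs_def] weight_def by (simp add: q_def \<beta>_def mult.assoc)
  moreover have "Q = M + 1 / \<beta>"
    using hp hM1 by (simp add: hQ \<beta>_def field_simps)
  moreover have "(profile has_real_derivative 0) (at 0 within {0..})"
    using has_real_derivative_profile_at_0 q_gt_1 by (simp add: profile_deriv_def)
  moreover have "profile differentiable (at r)" if "r > 0" for r
    using has_real_derivative_profile[OF that]
    by (rule has_field_derivative_imp_has_derivative[THEN differentiableI])
  ultimately show ?thesis
    using coefficients(1) \<open>a * real n - 1 > 0\<close> profile_pos profile_solves_radial_equation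
      profile_tendsto_0 has_real_derivative_profile_within profile_first_integral
    by auto blast
qed

end
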